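(* Let $\mathcal{H}$ be a finite-dimensional real inner-product space with norm $\|\cdot\|_{\mathcal{H}}$, and let $\mathscr{R}_*:\mathcal{H}\to\mathcal{H}$ be a continuous quasinonexpansive operator with nonempty fixed-point set $\mathrm{Fix}(\mathscr{R}_* )$. Let $(\mathscr{R}^{(k)})_{k\in\mathbb{N}}$ be a sequence of (possibly random) operators $\mathcal{H}\to\mathcal{H}$, and consider the iteration \[ x^{(k+1)} = (1-\gamma^{(k)})\,x^{(k)} + \gamma^{(k)}\,\mathscr{R}^{(k)}(x^{(k)}), \qquad k\in\mathbb{N}, \] with step sizes $\gamma^{(k)}\in[0,1]$ satisfying $\sum_{k\in\mathbb{N}}\gamma^{(k)}(1-\gamma^{(k)}) = +\infty$. Define the error $\epsilon^{(k)} \coloneqq \mathscr{R}^{(k)}(x^{(k)}) - \mathscr{R}_*(x^{(k)})$ and $\varepsilon^{(k)} \coloneqq \|\epsilon^{(k)}\|_{\mathcal{H}}$. Let $(\mathcal{F}_k)_{k\in\mathbb{N}}$ be a filtration such that $x^{(k)}$ is $\mathcal{F}_k$-measurable for each $k$. Suppose that almost surely the sequence $(x^{(k)})_{k\in\mathbb{N}}$ is bounded and $\sum_{k\in\mathbb{N}}\gamma^{(k)}\,\mathbb{E}[\varepsilon^{(k)}\mid\mathcal{F}_k] < +\infty$. Then $(x^{(k)})_{k\in\mathbb{N}}$ converges almost surely to a (random) point $x^\dagger \in \mathrm{Fix}(\mathscr{R}_* )$.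
   Context: An operator $\mathscr{R}_*:\mathcal{H}\to\mathcal{H}$ is quasinonexpansive if $\mathrm{Fix}(\mathscr{R}_* )=\{x:\mathscr{R}_*(x)=x\}$ is nonempty and $\|\mathscr{R}_*(x)-x^*\|_{\mathcal{H}}\le\|x-x^*\|_{\mathcal{H}}$ for all $x\in\mathcal{H}$ and all $x^*\in\mathrm{Fix}(\mathscr{R}_* )$. All random objects are defined on a common probability space. *)

theory Defs
  imports "HOL-Analysis.Analysis" "HOL-Probability.Probability"
begin

definition Fix :: "('a \<Rightarrow> 'a) \<Rightarrow> 'a set" where
  "Fix T = {x. T x = x}"

definition quasinonexpansive :: "('a::real_normed_vector \<Rightarrow> 'a) \<Rightarrow> bool" where
  "quasinonexpansive T \<longleftrightarrow> Fix T \<noteq> {} \<and>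
     (\<forall>x. \<forall>p\<in>Fix T. norm (T x - p) \<le> norm (x - p))"

end

theory Submission
  imports Defs
begin

(* Pathwise, this is the Krasnosel'skii-Mann argument with summable errors. For every fixed
   point p the distances ||x k - p|| decrease up to a summable error, hence converge; the
   squared-distance estimate moreover makes gamma k (1 - gamma k) ||x k - T (x k)||^2 summable,
   so, as the weights themselves are not summable, the residual tends to 0 along a subsequence.
   A cluster point of that subsequence is fixed by continuity, and since the distance to it
   converges, the whole sequence converges to it.
   The stochastic hypothesis controls only the conditional expectations of the errors. Stopping
   the error series once the (adapted) partial sums of conditional expectations exceed N gives
   a random variable of mean at most N; hence the pathwise error series is almost surely finite
   and the deterministic argument applies to almost every sample path. *)

lemma convergent_if_Suc_le_add_summable:
  fixes a b :: "nat \<Rightarrow> real"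
  assumes a_nonneg: "\<And>k. 0 \<le> a k" and b_nonneg: "\<And>k. 0 \<le> b k" and "summable b"
    and step: "\<And>k. a (Suc k) \<le> a k + b k"
  shows "convergent a"
proof -
  define c where "c k = a k - (\<Sum>j<k. b j)" for k
  have "decseq c"
    unfolding c_def by (rule decseq_SucI) (use step in \<open>simp add: algebra_simps\<close>)
  moreover have "- suminf b \<le> c k" for k
  proof -
    have "(\<Sum>j<k. b j) \<le> suminf b"
      by (rule sum_le_suminf[OF \<open>summable b\<close>]) (use b_nonneg in auto)
    then show ?thesis
      using a_nonneg[of k] unfolding c_def by linarith
  qed
  ultimately obtain L where "c \<longlonglongrightarrow> L"
    using decseq_convergent[of c "- suminf b"] by blast
  then have "(\<lambda>k. c k + (\<Sum>j<k. b j)) \<longlonglongrightarrow> L + suminf b"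
    by (intro tendsto_add summable_LIMSEQ \<open>summable b\<close>)
  then show ?thesis
    unfolding c_def by (auto simp: convergent_def)
qed

lemma power2_norm_convex_combination:
  fixes u v :: "'a::real_inner"
  shows "(norm ((1 - g) *\<^sub>R u + g *\<^sub>R v))\<^sup>2 =
    (1 - g) * (norm u)\<^sup>2 + g * (norm v)\<^sup>2 - g * (1 - g) * (norm (u - v))\<^sup>2"
  by (simp add: power2_norm_eq_inner inner_diff_left inner_diff_right inner_add_left
      inner_add_right algebra_simps inner_commute)

text \<open>In the iteration, \<open>u\<close> is the current iterate, \<open>t\<close> its image under the operator,
  \<open>v\<close> the inexact evaluation actually used, and \<open>p\<close> a fixed point.\<close>

lemma power2_dist_relaxed_step_le:
  fixes u t v p :: "'a::real_inner"
  assumes t_closer: "norm (t - p) \<le> norm (u - p)" and "0 \<le> g" "g \<le> 1"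
  defines "b \<equiv> g * norm (v - t)"
  shows "(norm ((1 - g) *\<^sub>R u + g *\<^sub>R v - p))\<^sup>2
    \<le> (norm (u - p))\<^sup>2 - g * (1 - g) * (norm (u - t))\<^sup>2 + b * (2 * norm (u - p) + b)"
proof -
  define y where "y = (1 - g) *\<^sub>R (u - p) + g *\<^sub>R (t - p)"
  have "(1 - g) *\<^sub>R u + g *\<^sub>R v - p = y + g *\<^sub>R (v - t)"
    unfolding y_def by (simp add: algebra_simps)
  then have dist_le: "norm ((1 - g) *\<^sub>R u + g *\<^sub>R v - p) \<le> norm y + b"
    using norm_triangle_ineq[of y "g *\<^sub>R (v - t)"] \<open>0 \<le> g\<close> unfolding b_def by simp
  have "g * (norm (t - p))\<^sup>2 \<le> g * (norm (u - p))\<^sup>2"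
    using t_closer \<open>0 \<le> g\<close> by (intro mult_left_mono power_mono) auto
  then have y_le: "(norm y)\<^sup>2 \<le> (norm (u - p))\<^sup>2 - g * (1 - g) * (norm (u - t))\<^sup>2"
    unfolding y_def power2_norm_convex_combination by (simp add: algebra_simps)
  moreover have "0 \<le> g * (1 - g) * (norm (u - t))\<^sup>2"
    using \<open>0 \<le> g\<close> \<open>g \<le> 1\<close> by simp
  ultimately have "(norm y)\<^sup>2 \<le> (norm (u - p))\<^sup>2"
    by linarith
  then have "norm y \<le> norm (u - p)"
    by (rule power2_le_imp_le) simp
  have "(norm ((1 - g) *\<^sub>R u + g *\<^sub>R v - p))\<^sup>2 \<le> (norm y + b)\<^sup>2"
    using dist_le by (simp add: power_mono)
  also have "\<dots> = (norm y)\<^sup>2 + b * (2 * norm y + b)"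
    by (simp add: power2_eq_square algebra_simps)
  also have "\<dots> \<le> (norm y)\<^sup>2 + b * (2 * norm (u - p) + b)"
    using \<open>norm y \<le> norm (u - p)\<close> \<open>0 \<le> g\<close> unfolding b_def by (simp add: mult_left_mono)
  finally show ?thesis
    using y_le by linarith
qed

lemma dist_relaxed_step_le:
  fixes u t v p :: "'a::real_inner"
  assumes "norm (t - p) \<le> norm (u - p)" and "0 \<le> g" "g \<le> 1"
  shows "norm ((1 - g) *\<^sub>R u + g *\<^sub>R v - p) \<le> norm (u - p) + g * norm (v - t)"
proof (rule power2_le_imp_le)
  have "0 \<le> g * (1 - g) * (norm (u - t))\<^sup>2"
    using \<open>0 \<le> g\<close> \<open>g \<le> 1\<close> by simp
  then show "(norm ((1 - g) *\<^sub>R u + g *\<^sub>R v - p))\<^sup>2 \<le> (norm (u - p) + g * norm (v - t))\<^sup>2"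
    using power2_dist_relaxed_step_le[OF assms, of v]
    by (simp add: power2_eq_square algebra_simps)
  show "0 \<le> norm (u - p) + g * norm (v - t)"
    using \<open>0 \<le> g\<close> by simp
qed

lemma subseq_tendsto_zero_if_weighted_summable:
  fixes w f :: "nat \<Rightarrow> real"
  assumes w_nonneg: "\<And>k. 0 \<le> w k" and "\<not> summable w"
    and f_nonneg: "\<And>k. 0 \<le> f k" and "summable (\<lambda>k. w k * f k)"
  obtains n where "filterlim n at_top sequentially" "(\<lambda>j. f (n j)) \<longlonglongrightarrow> 0"
proof -
  have "\<exists>k\<ge>N. f k < e" if "e > 0" for N e
  proof (rule ccontr)
    assume "\<not> (\<exists>k\<ge>N. f k < e)"
    then have bound: "norm (w k) \<le> w k * f k / e" if "k \<ge> N" for k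
    proof -
      have "w k * e \<le> w k * f k"
        using that \<open>\<not> (\<exists>k\<ge>N. f k < e)\<close> w_nonneg[of k] by (simp add: mult_left_mono not_less)
      then show ?thesis
        using \<open>e > 0\<close> w_nonneg[of k] by (simp add: pos_le_divide_eq)
    qed
    have "summable (\<lambda>k. w k * f k / e)"
      using \<open>summable (\<lambda>k. w k * f k)\<close> by (rule summable_divide)
    then have "summable w"
      using bound by (rule summable_comparison_test')
    with \<open>\<not> summable w\<close> show False
      by contradiction
  qed
  then have "\<forall>j. \<exists>k. k \<ge> j \<and> f k < inverse (real (Suc j))"
    by simp
  then obtain n where n: "\<And>j. n j \<ge> j \<and> f (n j) < inverse (real (Suc j))"
    by metis
  show ?thesis
  proof
    show "filterlim n at_top sequentially"
      by (rule filterlim_at_top_mono[OF filterlim_ident]) (use n in auto)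
    show "(\<lambda>j. f (n j)) \<longlonglongrightarrow> 0"
      by (rule tendsto_sandwich[OF _ _ tendsto_const LIMSEQ_inverse_real_of_nat])
        (use n f_nonneg in \<open>auto intro!: always_eventually less_imp_le\<close>)
  qed
qed

lemma tendsto_if_dist_convergent_and_subseq:
  fixes x :: "nat \<Rightarrow> 'a::metric_space"
  assumes "convergent (\<lambda>k. dist (x k) z)"
    and "filterlim n at_top sequentially" and "(\<lambda>j. x (n j)) \<longlonglongrightarrow> z"
  shows "x \<longlonglongrightarrow> z"
proof -
  obtain L where L: "(\<lambda>k. dist (x k) z) \<longlonglongrightarrow> L"
    using assms(1) by (auto simp: convergent_def)
  have "(\<lambda>j. dist (x (n j)) z) \<longlonglongrightarrow> L"
    using filterlim_compose[OF L assms(2)] by simp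
  moreover have "(\<lambda>j. dist (x (n j)) z) \<longlonglongrightarrow> 0"
    using tendsto_dist_iff[THEN iffD1, OF assms(3)] .
  ultimately have "L = 0"
    by (rule LIMSEQ_unique)
  with L have "(\<lambda>k. dist (x k) z) \<longlonglongrightarrow> 0"
    by simp
  then show ?thesis
    by (rule tendsto_dist_iff[THEN iffD2])
qed

locale KM_iteration =
  fixes T :: "'a::real_inner \<Rightarrow> 'a" and \<gamma> :: "nat \<Rightarrow> real" and r x :: "nat \<Rightarrow> 'a"
  assumes quasinonexpansive: "quasinonexpansive T"
    and step_size: "\<And>k. \<gamma> k \<in> {0..1}"
    and iteration: "\<And>k. x (Suc k) = (1 - \<gamma> k) *\<^sub>R x k + \<gamma> k *\<^sub>R r k"
    and summable_error: "summable (\<lambda>k. \<gamma> k * norm (r k - T (x k)))"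
begin

lemma fixpoint_exists: "\<exists>p. T p = p"
  using quasinonexpansive unfolding quasinonexpansive_def Fix_def by auto

lemma dist_fixpoint_le:
  assumes "T p = p"
  shows "norm (T y - p) \<le> norm (y - p)"
  using quasinonexpansive assms unfolding quasinonexpansive_def Fix_def by auto

lemma dist_fixpoint_convergent:
  assumes "T p = p"
  shows "convergent (\<lambda>k. norm (x k - p))"
proof (rule convergent_if_Suc_le_add_summable[OF _ _ summable_error])
  show "norm (x (Suc k) - p) \<le> norm (x k - p) + \<gamma> k * norm (r k - T (x k))" for k
    unfolding iteration using dist_relaxed_step_le[OF dist_fixpoint_le[OF assms]] step_size[of k]
    by auto
qed (use step_size in auto)

lemma dist_fixpoint_bounded:
  assumes "T p = p"
  shows "\<exists>K. \<forall>k. norm (x k - p) \<le> K"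
  using convergent_imp_Bseq[OF dist_fixpoint_convergent[OF assms]] unfolding Bseq_def by auto

lemma bounded_iterates: "bounded (range x)"
proof -
  obtain p where "T p = p"
    using fixpoint_exists by blast
  then obtain K where K: "\<And>k. norm (x k - p) \<le> K"
    using dist_fixpoint_bounded by blast
  have "norm (x k) \<le> K + norm p" for k
    using K[of k] norm_triangle_ineq2[of "x k" p] by linarith
  then show ?thesis
    unfolding bounded_iff by blast
qed

text \<open>The squared distance to a fixed point decreases by the residual term up to a summable
  error, so the residuals are summable against the weights \<open>\<gamma> k * (1 - \<gamma> k)\<close>.\<close>

lemma summable_residual: "summable (\<lambda>k. \<gamma> k * (1 - \<gamma> k) * (norm (x k - T (x k)))\<^sup>2)"
proof -
  obtain p where "T p = p"
    using fixpoint_exists by blast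
  define D where "D k = (norm (x k - p))\<^sup>2" for k
  define e where "e k = \<gamma> k * norm (r k - T (x k))" for k
  obtain K where K: "\<And>k. norm (x k - p) \<le> K"
    using dist_fixpoint_bounded[OF \<open>T p = p\<close>] by blast
  have e_nonneg: "0 \<le> e k" for k
    using step_size[of k] unfolding e_def by simp
  have e_le: "e k \<le> suminf e" for k
    using sum_le_suminf[of e "{k}"] summable_error e_nonneg unfolding e_def by auto
  have "convergent D"
    using dist_fixpoint_convergent[OF \<open>T p = p\<close>] unfolding D_def convergent_def
    by (auto intro: tendsto_power)
  then have "summable (\<lambda>k. D k - D (Suc k))"
    by (auto simp: convergent_def intro: telescope_summable')
  then have "summable (\<lambda>k. (D k - D (Suc k)) + (2 * K + suminf e) * e k)"
    using summable_error unfolding e_def by (intro summable_add summable_mult)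
  then show ?thesis
  proof (rule summable_comparison_test'[where N = 0])
    fix k
    have "e k * (2 * norm (x k - p) + e k) \<le> (2 * K + suminf e) * e k"
      using K[of k] e_le[of k] e_nonneg[of k] by (simp add: mult_left_mono mult.commute)
    moreover have "0 \<le> \<gamma> k * (1 - \<gamma> k) * (norm (x k - T (x k)))\<^sup>2"
      using step_size[of k] by simp
    ultimately show "norm (\<gamma> k * (1 - \<gamma> k) * (norm (x k - T (x k)))\<^sup>2)
        \<le> (D k - D (Suc k)) + (2 * K + suminf e) * e k"
      using power2_dist_relaxed_step_le[OF dist_fixpoint_le[OF \<open>T p = p\<close>, of "x k"],
          where g = "\<gamma> k" and v = "r k"]
        step_size[of k]
      unfolding D_def e_def iteration by (simp add: algebra_simps)
  qed
qed

end

theorem KM_iteration_tendsto_fixpoint: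
  fixes T :: "'a::{real_inner,heine_borel} \<Rightarrow> 'a"
  assumes "KM_iteration T \<gamma> r x" and "continuous_on UNIV T"
    and "\<not> summable (\<lambda>k. \<gamma> k * (1 - \<gamma> k))"
  shows "\<exists>z. T z = z \<and> x \<longlonglongrightarrow> z"
proof -
  interpret KM_iteration T \<gamma> r x by fact
  obtain n where n: "filterlim n at_top sequentially"
    and residual: "(\<lambda>j. (norm (x (n j) - T (x (n j))))\<^sup>2) \<longlonglongrightarrow> 0"
    using subseq_tendsto_zero_if_weighted_summable[OF _ \<open>\<not> summable _\<close> _ summable_residual]
      step_size by auto
  have "bounded (range (x \<circ> n))"
    using bounded_iterates by (rule bounded_subset) auto
  then obtain z \<rho> where "strict_mono \<rho>" and z: "(\<lambda>i. x (n (\<rho> i))) \<longlonglongrightarrow> z"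
    using bounded_imp_convergent_subsequence unfolding comp_def by blast
  have "(\<lambda>i. T (x (n (\<rho> i)))) \<longlonglongrightarrow> T z"
    using continuous_on_tendsto_compose[OF \<open>continuous_on UNIV T\<close> z] by simp
  then have "(\<lambda>i. (norm (x (n (\<rho> i)) - T (x (n (\<rho> i)))))\<^sup>2) \<longlonglongrightarrow> (norm (z - T z))\<^sup>2"
    by (rule tendsto_power[OF tendsto_norm[OF tendsto_diff[OF z]]])
  moreover have "(\<lambda>i. (norm (x (n (\<rho> i)) - T (x (n (\<rho> i)))))\<^sup>2) \<longlonglongrightarrow> 0"
    using LIMSEQ_subseq_LIMSEQ[OF residual \<open>strict_mono \<rho>\<close>] by (simp add: comp_def)
  ultimately have "T z = z"
    using LIMSEQ_unique by fastforce
  moreover have "x \<longlonglongrightarrow> z"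
  proof (rule tendsto_if_dist_convergent_and_subseq)
    show "convergent (\<lambda>k. dist (x k) z)"
      using dist_fixpoint_convergent[OF \<open>T z = z\<close>] by (simp add: dist_norm)
    show "filterlim (n \<circ> \<rho>) at_top sequentially"
      using filterlim_compose[OF n filterlim_subseq[OF \<open>strict_mono \<rho>\<close>]] by (simp add: comp_def)
  qed (use z in simp)
  ultimately show ?thesis
    by blast
qed

lemma stopped_partial_sum_le:
  fixes c :: "nat \<Rightarrow> ennreal"
  shows "(\<Sum>k<n. if (\<Sum>j\<le>k. c j) \<le> B then c k else 0) \<le> B"
proof (cases "\<exists>k<n. (\<Sum>j\<le>k. c j) \<le> B")
  case False
  then show ?thesis
    by simp
next
  case True
  define I where "I = {k. k < n \<and> (\<Sum>j\<le>k. c j) \<le> B}"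
  have "finite I" "I \<noteq> {}"
    using True unfolding I_def by auto
  then have "(\<Sum>j\<le>Max I. c j) \<le> B"
    using Max_in unfolding I_def by blast
  have "(\<Sum>k<n. if (\<Sum>j\<le>k. c j) \<le> B then c k else 0) = (\<Sum>k\<in>I. c k)"
    unfolding I_def by (simp add: sum.inter_filter[symmetric] lessThan_def)
  also have "\<dots> \<le> (\<Sum>j\<le>Max I. c j)"
    using \<open>finite I\<close> by (intro sum_mono2) auto
  also have "\<dots> \<le> B"
    by fact
  finally show ?thesis .
qed

lemma measurable_filtration_mono:
  assumes "filtration \<Omega> F" and "i \<le> j" and "f \<in> borel_measurable (F i)"
  shows "f \<in> borel_measurable (F j)"
proof -
  have "subalgebra (F j) (F i)"
    using filtration.sets_F_mono[OF assms(1,2)] filtration.space_F[OF assms(1)]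
    unfolding subalgebra_def by auto
  then show ?thesis
    using assms(3) by (rule measurable_from_subalg)
qed

context prob_space
begin

lemma sigma_finite_subalgebra_if_subalgebra:
  assumes "subalgebra M N"
  shows "sigma_finite_subalgebra M N"
  by (intro finite_measure_subalgebra_is_sigma_finite)
    (simp add: finite_measure_subalgebra_def finite_measure_subalgebra_axioms_def
      finite_measure_axioms assms)

text \<open>Stopping the series \<open>\<Sum>k. a k * e k\<close> as soon as the partial sums of its
  conditional expectations exceed \<open>B\<close> gives a random variable with mean at most \<open>B\<close>: each
  stopping indicator is \<open>F k\<close>-measurable, so it may be moved inside the conditional expectation.\<close>

lemma nn_integral_stopped_suminf_le:
  fixes e :: "nat \<Rightarrow> 'a \<Rightarrow> ennreal" and a :: "nat \<Rightarrow> ennreal"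
  assumes "filtration (space M) F" and sub: "\<And>k. subalgebra M (F k)"
    and e [measurable]: "\<And>k. e k \<in> borel_measurable M"
  defines "S k w \<equiv> \<Sum>j\<le>k. a j * nn_cond_exp M (F j) (e j) w"
  shows "(\<integral>\<^sup>+ w. (\<Sum>k. if S k w \<le> B then a k * e k w else 0) \<partial>M) \<le> B"
proof -
  have "(\<lambda>w. a j * nn_cond_exp M (F j) (e j) w) \<in> borel_measurable (F k)" if "j \<le> k" for j k
    using \<open>filtration (space M) F\<close> that by (rule measurable_filtration_mono) measurable
  then have S_F [measurable]: "S k \<in> borel_measurable (F k)" for k
    unfolding S_def by (intro borel_measurable_sum) auto
  have S_M [measurable]: "S k \<in> borel_measurable M" for k
    using sub by (rule measurable_from_subalg) (rule S_F)
  have stopping_F [measurable]: "(\<lambda>w. if S k w \<le> B then a k else 0) \<in> borel_measurable (F k)" for k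
    by measurable
  have "(\<integral>\<^sup>+ w. (\<Sum>k. if S k w \<le> B then a k * e k w else 0) \<partial>M)
      = (\<Sum>k. \<integral>\<^sup>+ w. (if S k w \<le> B then a k else 0) * e k w \<partial>M)"
    by (subst nn_integral_suminf) (auto intro!: suminf_cong nn_integral_cong)
  also have "\<dots> = (\<Sum>k. \<integral>\<^sup>+ w. (if S k w \<le> B then a k else 0) * nn_cond_exp M (F k) (e k) w \<partial>M)"
    using sigma_finite_subalgebra.nn_cond_exp_intg[OF sigma_finite_subalgebra_if_subalgebra[OF sub]
        stopping_F e] by simp
  also have "\<dots> = (\<integral>\<^sup>+ w. (\<Sum>k. if S k w \<le> B then a k * nn_cond_exp M (F k) (e k) w else 0) \<partial>M)"
    by (subst nn_integral_suminf) (auto intro!: suminf_cong nn_integral_cong)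
  also have "\<dots> \<le> (\<integral>\<^sup>+ w. B \<partial>M)"
    unfolding S_def
    by (intro nn_integral_mono suminf_le_const[OF summableI] stopped_partial_sum_le)
  also have "\<dots> = B"
    by (simp add: emeasure_space_1)
  finally show ?thesis .
qed

lemma AE_suminf_less_top_if_nn_cond_exp:
  fixes e :: "nat \<Rightarrow> 'a \<Rightarrow> ennreal" and a :: "nat \<Rightarrow> ennreal"
  assumes filtration: "filtration (space M) F" and sub: "\<And>k. subalgebra M (F k)"
    and e [measurable]: "\<And>k. e k \<in> borel_measurable M"
    and "AE w in M. (\<Sum>k. a k * nn_cond_exp M (F k) (e k) w) < \<infinity>"
  shows "AE w in M. (\<Sum>k. a k * e k w) < \<infinity>"
proof -
  define S where "S k w = (\<Sum>j\<le>k. a j * nn_cond_exp M (F j) (e j) w)" for k w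
  define Z where "Z N w = (\<Sum>k. if S k w \<le> of_nat N then a k * e k w else 0)" for N w
  have Z_le: "(\<integral>\<^sup>+ w. Z N w \<partial>M) \<le> of_nat N" for N
    unfolding Z_def S_def using nn_integral_stopped_suminf_le[OF filtration sub e] by simp
  have "AE w in M. Z N w \<noteq> \<infinity>" for N
  proof (rule nn_integral_PInf_AE)
    show "Z N \<in> borel_measurable M"
      unfolding Z_def S_def by measurable
    show "integral\<^sup>N M (Z N) \<noteq> \<infinity>"
      using Z_le[of N] by (auto simp: top_unique)
  qed
  then have "AE w in M. \<forall>N. Z N w \<noteq> \<infinity>"
    by (simp add: AE_all_countable)
  with assms(4) show ?thesis
  proof eventually_elim
    case (elim w)
    then obtain N where "(\<Sum>k. a k * nn_cond_exp M (F k) (e k) w) < of_nat N"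
      using ennreal_Ex_less_of_nat unfolding infinity_ennreal_def by blast
    moreover have "S k w \<le> (\<Sum>k. a k * nn_cond_exp M (F k) (e k) w)" for k
      unfolding S_def by (rule sum_le_suminf) auto
    ultimately have "S k w \<le> of_nat N" for k
      by (meson less_imp_le order_trans)
    then have "Z N w = (\<Sum>k. a k * e k w)"
      unfolding Z_def by simp
    then show ?case
      using spec[OF elim(2), of N] by (simp add: less_top)
  qed
qed

end

theorem mainTheorem2:
  fixes M :: "'w measure"
    and F :: "nat \<Rightarrow> 'w measure"
    and Rstar :: "'a::euclidean_space \<Rightarrow> 'a"
    and R :: "nat \<Rightarrow> 'w \<Rightarrow> 'a \<Rightarrow> 'a"
    and x :: "nat \<Rightarrow> 'w \<Rightarrow> 'a"
    and \<gamma> :: "nat \<Rightarrow> real"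
  assumes "prob_space M"
    and "continuous_on UNIV Rstar"
    and "quasinonexpansive Rstar"
    and "\<And>k. \<gamma> k \<in> {0..1}"
    and "\<not> summable (\<lambda>k. \<gamma> k * (1 - \<gamma> k))"
    and "\<And>k w. w \<in> space M \<Longrightarrow>
           x (Suc k) w = (1 - \<gamma> k) *\<^sub>R x k w + \<gamma> k *\<^sub>R R k w (x k w)"
    and "filtration (space M) F"
    and "\<And>k. subalgebra M (F k)"
    and "\<And>k. x k \<in> borel_measurable (F k)"
    and "\<And>k. (\<lambda>w. R k w (x k w)) \<in> borel_measurable M"
    and "AE w in M. bounded (range (\<lambda>k. x k w))"
    and "AE w in M. (\<Sum>k. ennreal (\<gamma> k) *
           nn_cond_exp M (F k) (\<lambda>v. ennreal (norm (R k v (x k v) - Rstar (x k v)))) w) < \<infinity>"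
  shows "\<exists>xdag. xdag \<in> borel_measurable M \<and>
           (AE w in M. xdag w \<in> Fix Rstar \<and> (\<lambda>k. x k w) \<longlonglongrightarrow> xdag w)"
proof -
  interpret prob_space M by fact
  have \<gamma>_nonneg: "0 \<le> \<gamma> k" for k
    using assms(4)[of k] by simp
  have x_M: "x k \<in> borel_measurable M" for k
    using assms(8,9) by (rule measurable_from_subalg)
  have "Rstar \<in> borel_measurable borel"
    using assms(2) by (rule borel_measurable_continuous_onI)
  then have error_M: "(\<lambda>v. ennreal (norm (R k v (x k v) - Rstar (x k v)))) \<in> borel_measurable M" for k
    using assms(10)[of k] x_M[of k] by measurable
  have "AE w in M. (\<Sum>k. ennreal (\<gamma> k) * ennreal (norm (R k w (x k w) - Rstar (x k w)))) < \<infinity>"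
    using AE_suminf_less_top_if_nn_cond_exp[OF assms(7,8) error_M assms(12)] .
  then have "AE w in M. summable (\<lambda>k. \<gamma> k * norm (R k w (x k w) - Rstar (x k w)))"
    by eventually_elim (auto intro!: summable_suminf_not_top simp: ennreal_mult \<gamma>_nonneg)
  then have "AE w in M. \<exists>z. Rstar z = z \<and> (\<lambda>k. x k w) \<longlonglongrightarrow> z"
    using AE_space
  proof eventually_elim
    case (elim w)
    then have "KM_iteration Rstar \<gamma> (\<lambda>k. R k w (x k w)) (\<lambda>k. x k w)"
      using assms(3,4,6) by unfold_locales auto
    then show ?case
      using assms(2,5) by (rule KM_iteration_tendsto_fixpoint)
  qed
  then have "AE w in M. lim (\<lambda>k. x k w) \<in> Fix Rstar \<and> (\<lambda>k. x k w) \<longlonglongrightarrow> lim (\<lambda>k. x k w)"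
    by eventually_elim (auto simp: Fix_def limI)
  moreover have "(\<lambda>w. lim (\<lambda>k. x k w)) \<in> borel_measurable M"
    using x_M by (rule borel_measurable_lim_metric)
  ultimately show ?thesis
    by blast
qed

end
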